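(* Let $1\leq a_1\leq\cdots\leq a_k$, $k\geq 3$, be a partition of a natural number $n$ such that $a_{k-1}\leq a_k-2$. Then $$S(a_1,\dots,a_{k-2},a_{k-1},a_k)\prec S(a_1,\dots,a_{k-2},a_{k-1}+1,a_k-1).$$
   Context: $M_k(G)$ denotes the number of closed walks of length $k$ in a graph $G$. For graphs $G,H$, $G\prec H$ means $M_k(G)\leq M_k(H)$ for all $k\geq 0$ with strict inequality for at least one $k$. For positive integers $a_1,\dots,a_k$, the starlike tree $S(a_1,\dots,a_k)$ is obtained from disjoint paths $P_{a_1+1},\dots,P_{a_k+1}$ ($P_m$ the path on $m$ vertices) by identifying one end vertex of each path into a single vertex (the center); the resulting pendant paths from the center are the branches, of lengths $a_1,\dots,a_k$. *)

theory Defs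
  imports Main
begin

definition closed_walks :: "'a set \<Rightarrow> ('a \<Rightarrow> 'a \<Rightarrow> bool) \<Rightarrow> nat \<Rightarrow> 'a list set" where
  "closed_walks V adj k = {xs. length xs = Suc k \<and> set xs \<subseteq> V \<and>
      (\<forall>i<k. adj (xs ! i) (xs ! Suc i)) \<and> hd xs = last xs}"

definition M :: "'a set \<Rightarrow> ('a \<Rightarrow> 'a \<Rightarrow> bool) \<Rightarrow> nat \<Rightarrow> nat" where
  "M V adj k = card (closed_walks V adj k)"

definition walk_prec :: "'a set \<times> ('a \<Rightarrow> 'a \<Rightarrow> bool) \<Rightarrow> 'b set \<times> ('b \<Rightarrow> 'b \<Rightarrow> bool) \<Rightarrow> bool"
  (infix "\<prec>\<^sub>W" 50) where
  "G \<prec>\<^sub>W H \<longleftrightarrow> (\<forall>k. M (fst G) (snd G) k \<le> M (fst H) (snd H) k) \<and>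
                   (\<exists>k. M (fst G) (snd G) k < M (fst H) (snd H) k)"

text \<open>Starlike tree S(a_1,...,a_k) for the list as = [a_1,...,a_k]:
center (0,0); branch i (0-based, i < length as) consists of vertices (Suc i, j), 1 <= j <= as!i,
forming the path (0,0) - (Suc i,1) - (Suc i,2) - ... - (Suc i, as!i).\<close>

definition starlike_verts :: "nat list \<Rightarrow> (nat \<times> nat) set" where
  "starlike_verts as = insert (0,0) {(Suc i, j) | i j. i < length as \<and> 1 \<le> j \<and> j \<le> as ! i}"

definition starlike_arc :: "nat \<times> nat \<Rightarrow> nat \<times> nat \<Rightarrow> bool" where
  "starlike_arc u v \<longleftrightarrow> (fst u = fst v \<and> 0 < fst u \<and> snd v = Suc (snd u))
                       \<or> (u = (0,0) \<and> 0 < fst v \<and> snd v = 1)"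

definition starlike_adj :: "nat list \<Rightarrow> nat \<times> nat \<Rightarrow> nat \<times> nat \<Rightarrow> bool" where
  "starlike_adj as u v \<longleftrightarrow> u \<in> starlike_verts as \<and> v \<in> starlike_verts as \<and>
      (starlike_arc u v \<or> starlike_arc v u)"

definition starlike :: "nat list \<Rightarrow> (nat \<times> nat) set \<times> (nat \<times> nat \<Rightarrow> nat \<times> nat \<Rightarrow> bool)" where
  "starlike as = (starlike_verts as, starlike_adj as)"

end

theory Submission
  imports Defs
begin

text \<open>Write a and b for the last two branch lengths and put the centre at (0, a) of the path
  (0, 0), ..., (0, a + b), with the other branches hanging at (0, a). Attaching the tail
  (0, 2a + 2), ..., (0, a + b) to (0, 2a + 1) gives S(..., a, b); attaching it to (0, 0) instead
  gives S(..., a + 1, b - 1). Both graphs agree on the core (the rest) and on the tail, so a closed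
  walk splits into tail visits and excursions into the core, which start and end at the vertex
  the tail is attached to. It therefore suffices to inject the closed walks in the core at
  (0, 2a + 1) into those at (0, 0), preserving length. The reflection (0, i) \<mapsto> (0, 2a + 1 - i)
  does this away from the branches at (0, a), and near them one reflects only the first and the
  last stretch of the walk and swaps the blocks in between. The walk from (0, 0) into a pendant
  branch and back is missed by this injection, so the inequality is strict for its length.\<close>

section \<open>Closed walks\<close>

lemma closed_walks_successively:
  "closed_walks V R k = {xs. length xs = Suc k \<and> set xs \<subseteq> V \<and> successively R xs \<and> hd xs = last xs}"
  by (auto simp: closed_walks_def successively_conv_nth)

lemma M_eq_of_iso:
  assumes bij: "bij_betw f V V'" and adj: "\<And>u v. u \<in> V \<Longrightarrow> v \<in> V \<Longrightarrow> R' (f u) (f v) = R u v"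
  shows "M V R k = M V' R' k"
proof -
  have map_in: "map f xs \<in> closed_walks V' R' k \<longleftrightarrow> xs \<in> closed_walks V R k" if "set xs \<subseteq> V" for xs
  proof -
    have "successively R' (map f xs) \<longleftrightarrow> successively R xs"
      unfolding successively_map using that adj by (intro successively_cong) auto
    moreover have "hd (map f xs) = last (map f xs) \<longleftrightarrow> hd xs = last xs" if "xs \<noteq> []"
    proof -
      have "hd xs \<in> V" "last xs \<in> V" using that \<open>set xs \<subseteq> V\<close> by auto
      then show ?thesis
        using that inj_on_eq_iff[OF bij_betw_imp_inj_on[OF bij]] by (simp add: hd_map last_map)
    qed
    moreover have "set (map f xs) \<subseteq> V'" using that bij_betwE[OF bij] by auto
    ultimately show ?thesis
      using that by (cases "xs = []") (auto simp: closed_walks_successively)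
  qed
  have "closed_walks V' R' k = map f ` closed_walks V R k"
  proof
    show "closed_walks V' R' k \<subseteq> map f ` closed_walks V R k"
    proof
      fix ys assume ys: "ys \<in> closed_walks V' R' k"
      then have "ys \<in> map f ` lists V"
        using bij_betw_imp_surj_on[OF bij_lists[OF bij]] by (auto simp: closed_walks_def)
      then show "ys \<in> map f ` closed_walks V R k" using ys map_in by auto
    qed
    show "map f ` closed_walks V R k \<subseteq> closed_walks V' R' k"
    proof
      fix ys assume "ys \<in> map f ` closed_walks V R k"
      then obtain xs where "xs \<in> closed_walks V R k" "ys = map f xs" by blast
      moreover from this have "set xs \<subseteq> V" by (simp add: closed_walks_def)
      ultimately show "ys \<in> closed_walks V' R' k" using map_in by blast
    qed
  qed
  moreover have "inj_on (map f) (closed_walks V R k)"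
    by (rule inj_on_subset[OF inj_on_map_lists[OF bij_betw_imp_inj_on[OF bij]]])
      (auto simp: closed_walks_def)
  ultimately show ?thesis by (simp add: M_def card_image)
qed

definition cyclic_walk :: "('a \<Rightarrow> 'a \<Rightarrow> bool) \<Rightarrow> 'a list \<Rightarrow> bool" where
  "cyclic_walk R c \<longleftrightarrow> c \<noteq> [] \<and> successively R (c @ [hd c])"

lemma cyclic_walk_rotate1:
  assumes "cyclic_walk R c"
  shows "cyclic_walk R (rotate1 c)"
proof (cases c)
  case (Cons x xs)
  show ?thesis
  proof (cases xs)
    case (Cons y ys)
    have "successively R (x # xs @ [x])"
      using assms \<open>c = x # xs\<close> by (simp add: cyclic_walk_def)
    then have "successively R (xs @ [x]) \<and> R x y"
      using Cons by simp
    then have "successively R ((xs @ [x]) @ [hd (xs @ [x])])"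
      unfolding successively_append_iff using Cons by simp
    then show ?thesis
      using \<open>c = x # xs\<close> by (simp add: cyclic_walk_def)
  qed (use assms \<open>c = x # xs\<close> in simp)
qed (use assms in simp)

lemma cyclic_walk_rotate: "cyclic_walk R c \<Longrightarrow> cyclic_walk R (rotate n c)"
  by (induction n) (auto simp: cyclic_walk_rotate1)

lemma inj_rotate: "inj (rotate n)"
  by (simp add: rotate_def inj_fn inj_rotate1)

definition cyclic_walks :: "'a set \<Rightarrow> ('a \<Rightarrow> 'a \<Rightarrow> bool) \<Rightarrow> nat \<Rightarrow> 'a list set" where
  "cyclic_walks V R k = {c. length c = k \<and> set c \<subseteq> V \<and> cyclic_walk R c}"

lemma finite_cyclic_walks: "finite V \<Longrightarrow> finite (cyclic_walks V R k)"
  by (rule finite_subset[OF _ finite_lists_length_eq[of V k]]) (auto simp: cyclic_walks_def)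

lemma closed_walks_eq_image_cyclic_walks:
  assumes "0 < k"
  shows "closed_walks V R k = (\<lambda>c. c @ [hd c]) ` cyclic_walks V R k"
proof
  show "(\<lambda>c. c @ [hd c]) ` cyclic_walks V R k \<subseteq> closed_walks V R k"
    by (auto simp: cyclic_walks_def cyclic_walk_def closed_walks_def successively_conv_nth
        subset_iff)
  show "closed_walks V R k \<subseteq> (\<lambda>c. c @ [hd c]) ` cyclic_walks V R k"
  proof
    fix xs assume "xs \<in> closed_walks V R k"
    then have xs: "length xs = Suc k" "set xs \<subseteq> V" "successively R xs" "hd xs = last xs"
      by (auto simp: closed_walks_def successively_conv_nth)
    define c where "c = butlast xs"
    have "c \<noteq> []" "xs \<noteq> []"
      using xs(1) assms by (auto simp: c_def simp flip: length_0_conv)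
    then have xs_eq: "xs = c @ [hd c]"
      using xs(4) by (metis c_def append_butlast_last_id hd_append2)
    have "c \<in> cyclic_walks V R k"
      using xs \<open>c \<noteq> []\<close> unfolding xs_eq by (simp add: cyclic_walks_def cyclic_walk_def)
    moreover note xs_eq
    ultimately show "xs \<in> (\<lambda>c. c @ [hd c]) ` cyclic_walks V R k" by blast
  qed
qed

lemma M_eq_card_cyclic_walks:
  assumes "0 < k"
  shows "M V R k = card (cyclic_walks V R k)"
proof -
  have "inj_on (\<lambda>c. c @ [hd c]) (cyclic_walks V R k)"
    by (rule inj_on_inverseI[where g = butlast]) simp
  then show ?thesis
    by (simp add: M_def closed_walks_eq_image_cyclic_walks[OF assms] card_image)
qed

section \<open>Walks inside a vertex set\<close>

definition walks_between :: "'a set \<Rightarrow> ('a \<Rightarrow> 'a \<Rightarrow> bool) \<Rightarrow> 'a \<Rightarrow> 'a \<Rightarrow> 'a list set" where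
  "walks_between K R u v = {p. p \<noteq> [] \<and> set p \<subseteq> K \<and> successively R p \<and> hd p = u \<and> last p = v}"

lemma walks_between_append:
  assumes "p \<in> walks_between K R u v" "q \<in> walks_between K R v' w" "R v v'"
  shows "p @ q \<in> walks_between K R u w"
  using assms by (auto simp: walks_between_def successively_append_iff)

lemma walks_between_appendD:
  assumes "p @ q \<in> walks_between K R u w" "p \<noteq> []" "q \<noteq> []"
  shows "p \<in> walks_between K R u (last p)" "q \<in> walks_between K R (hd q) w" "R (last p) (hd q)"
  using assms by (auto simp: walks_between_def successively_append_iff)

definition takeWhile_end :: "('a \<Rightarrow> bool) \<Rightarrow> 'a list \<Rightarrow> 'a list" where
  "takeWhile_end P xs = rev (takeWhile P (rev xs))"

definition dropWhile_end :: "('a \<Rightarrow> bool) \<Rightarrow> 'a list \<Rightarrow> 'a list" where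
  "dropWhile_end P xs = rev (dropWhile P (rev xs))"

lemma dropWhile_end_append_takeWhile_end: "dropWhile_end P xs @ takeWhile_end P xs = xs"
  unfolding dropWhile_end_def takeWhile_end_def
  by (metis rev_append rev_rev_ident takeWhile_dropWhile_id)

lemma takeWhile_end_dropWhile_end_append:
  assumes "ys \<noteq> []" "\<not> P (last ys)" "\<forall>u\<in>set xs. P u"
  shows "takeWhile_end P (ys @ xs) = xs" "dropWhile_end P (ys @ xs) = ys"
proof -
  obtain ys' y where ys: "ys = ys' @ [y]" using assms(1) by (cases ys rule: rev_cases) auto
  have "takeWhile P (rev xs @ y # rev ys') = rev xs @ takeWhile P (y # rev ys')"
    by (rule takeWhile_append2) (use assms(3) in auto)
  moreover have "dropWhile P (rev xs @ y # rev ys') = dropWhile P (y # rev ys')"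
    by (rule dropWhile_append2) (use assms(3) in auto)
  ultimately
  show "takeWhile_end P (ys @ xs) = xs" "dropWhile_end P (ys @ xs) = ys"
    using assms(2) ys by (simp_all add: takeWhile_end_def dropWhile_end_def)
qed

lemma takeWhile_dropWhile_append:
  assumes "\<forall>u\<in>set xs. P u" "ys \<noteq> []" "\<not> P (hd ys)"
  shows "takeWhile P (xs @ ys) = xs" "dropWhile P (xs @ ys) = ys"
proof -
  obtain y ys' where "ys = y # ys'" using assms(2) by (cases ys) auto
  then show "takeWhile P (xs @ ys) = xs" "dropWhile P (xs @ ys) = ys"
    using assms by (simp_all add: takeWhile_append2 dropWhile_append2)
qed

lemma walks_between_split_takeWhile:
  assumes "p \<in> walks_between K R u w" "u \<in> S" "\<not> set p \<subseteq> S"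
  defines "p1 \<equiv> takeWhile (\<lambda>v. v \<in> S) p" and "p2 \<equiv> dropWhile (\<lambda>v. v \<in> S) p"
  shows "p = p1 @ p2" "p1 \<in> walks_between K R u (last p1)" "set p1 \<subseteq> S"
    "p2 \<in> walks_between K R (hd p2) w" "hd p2 \<notin> S" "R (last p1) (hd p2)"
proof -
  show "p = p1 @ p2" by (simp add: p1_def p2_def)
  moreover have "p1 \<noteq> []" using assms(1,2) by (cases p) (auto simp: p1_def walks_between_def)
  moreover have "p2 \<noteq> []" using assms(3) by (auto simp: p2_def dropWhile_eq_Nil_conv)
  ultimately show "p1 \<in> walks_between K R u (last p1)" "p2 \<in> walks_between K R (hd p2) w"
    "R (last p1) (hd p2)"
    using walks_between_appendD[of p1 p2] assms(1)
    by (metis walks_between_def mem_Collect_eq hd_append2)+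
  show "set p1 \<subseteq> S" by (auto simp: p1_def dest: set_takeWhileD)
  show "hd p2 \<notin> S" using \<open>p2 \<noteq> []\<close> unfolding p2_def by (metis hd_dropWhile)
qed

lemma walks_between_split_takeWhile_end:
  assumes "p \<in> walks_between K R u w" "w \<in> S" "\<not> set p \<subseteq> S"
  defines "p1 \<equiv> dropWhile_end (\<lambda>v. v \<in> S) p" and "p2 \<equiv> takeWhile_end (\<lambda>v. v \<in> S) p"
  shows "p = p1 @ p2" "p1 \<in> walks_between K R u (last p1)" "last p1 \<notin> S"
    "p2 \<in> walks_between K R (hd p2) w" "set p2 \<subseteq> S" "R (last p1) (hd p2)"
proof -
  have rev: "rev p \<in> walks_between K (\<lambda>v v'. R v' v) w u"
    using assms(1) by (auto simp: walks_between_def hd_rev last_rev)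
  show "p = p1 @ p2" by (simp add: p1_def p2_def dropWhile_end_append_takeWhile_end)
  have "rev p = rev p2 @ rev p1" "rev p2 \<in> walks_between K (\<lambda>v v'. R v' v) w (last (rev p2))"
    "set (rev p2) \<subseteq> S" "rev p1 \<in> walks_between K (\<lambda>v v'. R v' v) (hd (rev p1)) u"
    "hd (rev p1) \<notin> S" "R (hd (rev p1)) (last (rev p2))"
    using walks_between_split_takeWhile[OF rev] assms(2,3)
    by (simp_all add: p1_def p2_def takeWhile_end_def dropWhile_end_def)
  then show "p1 \<in> walks_between K R u (last p1)" "last p1 \<notin> S"
    "p2 \<in> walks_between K R (hd p2) w" "set p2 \<subseteq> S" "R (last p1) (hd p2)"
    by (auto simp: walks_between_def hd_rev last_rev)
qed

section \<open>Swapping excursions\<close>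

function map_runs :: "('a \<Rightarrow> bool) \<Rightarrow> ('a list \<Rightarrow> 'a list) \<Rightarrow> 'a list \<Rightarrow> 'a list" where
  "map_runs P f [] = []"
| "map_runs P f (z # zs) = (if P z then z # map_runs P f zs
     else f (takeWhile (\<lambda>v. \<not> P v) (z # zs)) @ map_runs P f (dropWhile (\<lambda>v. \<not> P v) (z # zs)))"
  by pat_completeness auto
termination
  by (relation "measure (\<lambda>(P, f, xs). length xs)") (auto simp: le_imp_less_Suc length_dropWhile_le)

lemma map_runs_run_append:
  assumes "u \<noteq> []" "\<forall>v\<in>set u. \<not> P v" "ys = [] \<or> P (hd ys)"
  shows "map_runs P f (u @ ys) = f u @ map_runs P f ys"
proof -
  obtain z zs where "u = z # zs" using assms(1) by (cases u) auto
  moreover have "takeWhile (\<lambda>v. \<not> P v) (u @ ys) = u" "dropWhile (\<lambda>v. \<not> P v) (u @ ys) = ys"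
    using assms by (cases ys; simp add: takeWhile_append2 dropWhile_append2)+
  ultimately show ?thesis using assms(2) by simp
qed

lemma map_runs_snoc:
  assumes "P t"
  shows "map_runs P f (xs @ [t]) = map_runs P f xs @ [t]"
  using assms
proof (induction P f xs rule: map_runs.induct)
  case (2 P f z zs)
  consider "P z" | "\<not> P z" "\<forall>v\<in>set zs. \<not> P v" | w where "\<not> P z" "w \<in> set zs" "P w"
    by auto
  then show ?case
  proof cases
    case 2
    then show ?thesis
      using map_runs_run_append[of "z # zs" P "[t]" f] map_runs_run_append[of "z # zs" P "[]" f]
        \<open>P t\<close> by simp
  next
    case (3 w)
    then show ?thesis
      using 2 takeWhile_append1[of w zs] dropWhile_append1[of w zs] by simp
  qed (use 2 in simp)
qed simp

lemma map_runs_preserves: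
  assumes "\<And>r. set r \<subseteq> A \<Longrightarrow> \<forall>v\<in>set r. \<not> P v \<Longrightarrow> set (f r) \<subseteq> A \<and> map P (f r) = map P r"
    and "set xs \<subseteq> A"
  shows "set (map_runs P f xs) \<subseteq> A \<and> map P (map_runs P f xs) = map P xs"
  using assms
proof (induction P f xs rule: map_runs.induct)
  case (2 P f z zs)
  let ?r = "takeWhile (\<lambda>v. \<not> P v) (z # zs)"
  let ?d = "dropWhile (\<lambda>v. \<not> P v) (z # zs)"
  have "set ?r \<subseteq> A" "set ?d \<subseteq> A" "\<forall>v\<in>set ?r. \<not> P v"
    using "2.prems"(2) by (auto dest: set_takeWhileD set_dropWhileD)
  then have "set (f ?r) \<subseteq> A \<and> map P (f ?r) = map P ?r"
    using "2.prems"(1) by blast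
  moreover have "map P ?r @ map P ?d = map P (z # zs)"
    by (metis map_append takeWhile_dropWhile_id)
  ultimately show ?case
    using 2 \<open>set ?d \<subseteq> A\<close> by (auto simp del: takeWhile.simps dropWhile.simps)
qed simp

locale excursion_swap =
  fixes V K T :: "'a set" and adj1 adj2 :: "'a \<Rightarrow> 'a \<Rightarrow> bool" and x y t :: 'a
    and swap unswap :: "'a list \<Rightarrow> 'a list"
  assumes finite_V: "finite V" and V_eq: "V = K \<union> T" and disjoint: "K \<inter> T = {}"
    and x_in: "x \<in> K" and y_in: "y \<in> K" and t_in: "t \<in> T"
    and sym1: "adj1 u v \<Longrightarrow> adj1 v u" and sym2: "adj2 u v \<Longrightarrow> adj2 v u"
    and agree_K: "u \<in> K \<Longrightarrow> v \<in> K \<Longrightarrow> adj1 u v = adj2 u v"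
    and agree_T: "u \<in> T \<Longrightarrow> v \<in> T \<Longrightarrow> adj1 u v = adj2 u v"
    and cross1: "u \<in> K \<Longrightarrow> v \<in> T \<Longrightarrow> adj1 u v \<longleftrightarrow> u = x \<and> v = t"
    and cross2: "u \<in> K \<Longrightarrow> v \<in> T \<Longrightarrow> adj2 u v \<longleftrightarrow> u = y \<and> v = t"
    and swap_in: "set r \<subseteq> K \<Longrightarrow> set (swap r) \<subseteq> K \<and> length (swap r) = length r"
    and swap_excursion: "r \<in> walks_between K adj1 x x \<Longrightarrow> swap r \<in> walks_between K adj1 y y"
    and unswap_swap: "r \<in> walks_between K adj1 x x \<Longrightarrow> unswap (swap r) = r"
begin

abbreviation "swap_runs \<equiv> map_runs (\<lambda>v. v \<in> T) swap"
abbreviation "unswap_runs \<equiv> map_runs (\<lambda>v. v \<in> T) unswap"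
abbreviation "pattern c \<equiv> map (\<lambda>v. v \<in> T) c"

lemma walk_in_K_adj2: "successively adj1 r \<Longrightarrow> set r \<subseteq> K \<Longrightarrow> successively adj2 r"
  by (erule successively_mono) (use agree_K in auto)

lemma adj1_T_K: "adj1 u v \<Longrightarrow> u \<in> T \<Longrightarrow> v \<in> K \<Longrightarrow> u = t \<and> v = x"
  using cross1 sym1 by blast

lemma swap_runs_in_and_pattern:
  assumes "set w \<subseteq> V"
  shows "set (swap_runs w) \<subseteq> V \<and> pattern (swap_runs w) = pattern w"
proof (rule map_runs_preserves[OF _ assms])
  fix r assume r: "set r \<subseteq> V" "\<forall>v\<in>set r. v \<notin> T"
  then have "set r \<subseteq> K" using V_eq by auto
  then have "set (swap r) \<subseteq> K" "length (swap r) = length r" using swap_in by auto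
  moreover have "pattern xs = replicate (length xs) False" if "\<forall>v\<in>set xs. v \<notin> T" for xs
    using that by (simp flip: map_replicate_const)
  moreover have "\<forall>v\<in>set (swap r). v \<notin> T"
    using \<open>set (swap r) \<subseteq> K\<close> disjoint by blast
  ultimately show "set (swap r) \<subseteq> V \<and> pattern (swap r) = pattern r"
    using r(2) V_eq by auto
qed

lemma walk_split_at_tail:
  assumes "w \<in> walks_between V adj1 x v" "v \<in> T"
  obtains r d where "w = r @ d" "r \<in> walks_between K adj1 x x" "d \<in> walks_between V adj1 t v"
proof -
  have "v \<in> set w" using assms(1) by (auto simp: walks_between_def)
  then have "\<not> set w \<subseteq> K" using assms(2) disjoint by auto
  note split = walks_between_split_takeWhile[OF assms(1) x_in this]
  let ?r = "takeWhile (\<lambda>v. v \<in> K) w" and ?d = "dropWhile (\<lambda>v. v \<in> K) w"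
  have "?r \<noteq> []" "?d \<noteq> []" "set ?d \<subseteq> V" using split(2,4) by (auto simp: walks_between_def)
  then have "last ?r \<in> K" "hd ?d \<in> T"
    using split(3,5) V_eq last_in_set[of ?r] hd_in_set[of ?d] by blast+
  then have "last ?r = x" "hd ?d = t" using cross1 split(6) by auto
  then show ?thesis
    using that[of ?r ?d] split(1-4) by (auto simp: walks_between_def)
qed

lemma swap_runs_walk:
  assumes "w \<in> walks_between V adj1 u v" "v \<in> T" "u \<in> T \<or> u = x"
  shows "successively adj2 (swap_runs w) \<and> hd (swap_runs w) = (if u \<in> T then u else y)
    \<and> unswap_runs (swap_runs w) = w"
  using assms
proof (induction "length w" arbitrary: w u rule: less_induct)
  case less
  show ?case
  proof (cases "u \<in> T")
    case True
    obtain zs where w: "w = u # zs" using less.prems(1) by (cases w) (auto simp: walks_between_def)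
    show ?thesis
    proof (cases "zs = []")
      case False
      have zs: "zs \<in> walks_between V adj1 (hd zs) v" "adj1 u (hd zs)"
        using less.prems(1) w False by (auto simp: walks_between_def successively_Cons)
      moreover have "hd zs \<in> V"
        using zs(1) hd_in_set[OF False] by (auto simp: walks_between_def simp del: hd_in_set)
      ultimately have "hd zs \<in> T \<or> (u = t \<and> hd zs = x)"
        using adj1_T_K[OF _ True] V_eq by blast
      then have "hd zs \<in> T \<or> hd zs = x" and IH: "successively adj2 (swap_runs zs)
          \<and> hd (swap_runs zs) = (if hd zs \<in> T then hd zs else y) \<and> unswap_runs (swap_runs zs) = zs"
        using less.hyps[OF _ zs(1) less.prems(2)] w by auto
      moreover have "adj2 u (hd (swap_runs zs))"
        using IH zs(2) agree_T True \<open>hd zs \<in> T \<or> (u = t \<and> hd zs = x)\<close> cross2[OF y_in t_in] sym2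
        by (auto split: if_splits)
      ultimately show ?thesis using w True by (simp add: successively_Cons)
    qed (use w True in simp)
  next
    case False
    then have "u = x" using less.prems(3) by simp
    then obtain r d where w: "w = r @ d" and r: "r \<in> walks_between K adj1 x x"
      and d: "d \<in> walks_between V adj1 t v"
      using walk_split_at_tail less.prems(1,2) by blast
    have "r \<noteq> []" "\<forall>v\<in>set r. v \<notin> T" using r disjoint by (auto simp: walks_between_def)
    then have IH: "successively adj2 (swap_runs d) \<and> hd (swap_runs d) = t
        \<and> unswap_runs (swap_runs d) = d"
      using less.hyps[OF _ d less.prems(2)] w t_in by simp
    have "hd d = t" using d by (simp add: walks_between_def)
    then have eq: "swap_runs w = swap r @ swap_runs d"
      using map_runs_run_append[OF \<open>r \<noteq> []\<close> \<open>\<forall>v\<in>set r. v \<notin> T\<close>] w t_in by simp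
    have s: "swap r \<in> walks_between K adj1 y y" using swap_excursion[OF r] .
    then have "swap r \<noteq> []" "\<forall>v\<in>set (swap r). v \<notin> T"
      using disjoint by (auto simp: walks_between_def)
    then have "unswap_runs (swap_runs w) = unswap (swap r) @ unswap_runs (swap_runs d)"
      using eq map_runs_run_append[of "swap r"] IH t_in by simp
    also have "\<dots> = w" using unswap_swap[OF r] IH w by simp
    finally show ?thesis
      using eq IH s walk_in_K_adj2 cross2[OF y_in t_in] False
      by (auto simp: walks_between_def successively_append_iff)
  qed
qed

lemma swap_runs_cyclic_walk:
  assumes "cyclic_walk adj1 c" "set c \<subseteq> V" "hd c \<in> T"
  shows "cyclic_walk adj2 (swap_runs c) \<and> unswap_runs (swap_runs c) = c"
proof -
  have "c \<noteq> []" using assms(1) by (simp add: cyclic_walk_def)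
  then have "c @ [hd c] \<in> walks_between V adj1 (hd c) (hd c)"
    using assms by (auto simp: cyclic_walk_def walks_between_def)
  then have "successively adj2 (swap_runs c @ [hd c])" "unswap_runs (swap_runs c) @ [hd c] = c @ [hd c]"
    using swap_runs_walk[of "c @ [hd c]"] assms(3) map_runs_snoc[of _ "hd c"] by auto
  moreover have "length (swap_runs c) = length c"
    using swap_runs_in_and_pattern[OF assms(2)] by (metis length_map)
  then have "swap_runs c \<noteq> []" using \<open>c \<noteq> []\<close> by auto
  moreover have "hd (swap_runs c) = hd c"
    using swap_runs_walk[of "c @ [hd c]"] assms(3) map_runs_snoc[of _ "hd c"] \<open>c \<noteq> []\<close>
      \<open>c @ [hd c] \<in> walks_between V adj1 (hd c) (hd c)\<close> calculation(3) by (auto simp: hd_append)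
  ultimately show ?thesis by (simp add: cyclic_walk_def)
qed

definition first_tail :: "'a list \<Rightarrow> nat" where
  "first_tail c = length (takeWhile (\<lambda>v. v \<notin> T) c)"

text \<open>After rotating the walk to start in the tail, every maximal run of core vertices is an
  excursion at x; rotating back keeps the tail vertices in place, and their positions determine
  the rotation.\<close>

definition swap_cycle :: "'a list \<Rightarrow> 'a list" where
  "swap_cycle c = (if \<exists>v\<in>set c. v \<in> T
     then rotate (length c - first_tail c) (swap_runs (rotate (first_tail c) c)) else c)"

lemma first_tail_less: "\<exists>v\<in>set c. v \<in> T \<Longrightarrow> first_tail c < length c"
  unfolding first_tail_def by (induction c) auto

lemma hd_rotate_first_tail:
  assumes "\<exists>v\<in>set c. v \<in> T"
  shows "hd (rotate (first_tail c) c) \<in> T"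
proof -
  have "c \<noteq> []" using assms by auto
  then show ?thesis
    using nth_length_takeWhile[of "\<lambda>v. v \<notin> T" c] first_tail_less[OF assms]
    by (simp add: hd_rotate_conv_nth first_tail_def)
qed

lemma first_tail_pattern: "first_tail c = length (takeWhile (\<lambda>b. \<not> b) (pattern c))"
  by (simp add: first_tail_def takeWhile_map comp_def)

lemma swap_cycle_in_and_pattern:
  assumes "c \<in> cyclic_walks V adj1 k"
  shows "swap_cycle c \<in> cyclic_walks V adj2 k \<and> pattern (swap_cycle c) = pattern c"
proof (cases "\<exists>v\<in>set c. v \<in> T")
  case False
  then have "set c \<subseteq> K" "c \<noteq> []" "successively adj1 (c @ [hd c])"
    using assms V_eq by (auto simp: cyclic_walks_def cyclic_walk_def)
  moreover have "hd c \<in> K" using calculation(1,2) by auto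
  ultimately have "cyclic_walk adj2 c"
    using walk_in_K_adj2[of "c @ [hd c]"] by (simp add: cyclic_walk_def)
  then show ?thesis using False assms by (simp add: swap_cycle_def cyclic_walks_def)
next
  case True
  let ?i = "first_tail c"
  let ?c = "rotate ?i c"
  have c: "length c = k" "set c \<subseteq> V" "cyclic_walk adj1 c"
    using assms by (auto simp: cyclic_walks_def)
  have swap_c: "cyclic_walk adj2 (swap_runs ?c)" "set (swap_runs ?c) \<subseteq> V"
    "pattern (swap_runs ?c) = pattern ?c"
    using swap_runs_cyclic_walk[OF cyclic_walk_rotate[OF c(3)] _ hd_rotate_first_tail[OF True]]
      swap_runs_in_and_pattern[of ?c] c by auto
  have "pattern (swap_cycle c) = rotate (k - ?i) (pattern (swap_runs ?c))"
    using True c by (simp add: swap_cycle_def rotate_map)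
  also have "\<dots> = rotate (k - ?i) (rotate ?i (pattern c))"
    using swap_c(3) by (simp add: rotate_map)
  also have "\<dots> = pattern c"
    using first_tail_less[OF True] c(1) by (simp add: rotate_rotate)
  finally have "pattern (swap_cycle c) = pattern c" .
  moreover from this have "length (swap_cycle c) = k"
    using c(1) by (metis length_map)
  ultimately show ?thesis
    using True swap_c cyclic_walk_rotate by (auto simp: swap_cycle_def cyclic_walks_def)
qed

lemma inj_on_swap_cycle: "inj_on swap_cycle (cyclic_walks V adj1 k)"
proof
  fix c1 c2 assume c1: "c1 \<in> cyclic_walks V adj1 k" and c2: "c2 \<in> cyclic_walks V adj1 k"
    and eq: "swap_cycle c1 = swap_cycle c2"
  have pat: "pattern c1 = pattern c2"
    using swap_cycle_in_and_pattern[OF c1] swap_cycle_in_and_pattern[OF c2] eq by simp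
  have meets_T: "(\<exists>v\<in>set c. v \<in> T) \<longleftrightarrow> True \<in> set (pattern c)" for c by auto
  show "c1 = c2"
  proof (cases "\<exists>v\<in>set c1. v \<in> T")
    case True
    then have T2: "\<exists>v\<in>set c2. v \<in> T" using pat meets_T by metis
    define i where "i = first_tail c1"
    have i2: "first_tail c2 = i" using pat by (simp add: i_def first_tail_pattern)
    have lengths: "length c1 = k" "length c2 = k" using c1 c2 by (auto simp: cyclic_walks_def)
    have "swap_runs (rotate i c1) = swap_runs (rotate i c2)"
      using eq True T2 lengths i2 injD[OF inj_rotate] by (simp add: swap_cycle_def i_def)
    then have "rotate i c1 = rotate i c2"
      using swap_runs_cyclic_walk[OF cyclic_walk_rotate _ hd_rotate_first_tail] c1 c2 True T2 i2
      by (metis (no_types, lifting) cyclic_walks_def i_def mem_Collect_eq set_rotate)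
    then show ?thesis using injD[OF inj_rotate] by blast
  qed (use eq pat meets_T in \<open>metis swap_cycle_def\<close>)
qed

lemma M_le: "M V adj1 k \<le> M V adj2 k"
proof (cases "k = 0")
  case True
  then show ?thesis by (simp add: M_def closed_walks_def)
next
  case False
  have "card (cyclic_walks V adj1 k) \<le> card (cyclic_walks V adj2 k)"
    by (rule card_inj_on_le[OF inj_on_swap_cycle])
      (use swap_cycle_in_and_pattern finite_cyclic_walks[OF finite_V] in auto)
  then show ?thesis using False by (simp add: M_eq_card_cyclic_walks)
qed

lemma swap_cycle_single_excursion:
  assumes "c0 # cs \<in> cyclic_walks V adj1 k" "c0 \<in> T" "cs \<noteq> []" "set cs \<subseteq> K"
  shows "cs \<in> walks_between K adj1 x x \<and> swap_cycle (c0 # cs) = c0 # swap cs"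
proof -
  have walk: "successively adj1 (c0 # cs @ [c0])" "k = Suc (length cs)"
    using assms(1) by (auto simp: cyclic_walks_def cyclic_walk_def)
  then have "adj1 c0 (hd cs)" "successively adj1 cs" "adj1 (last cs) c0"
    using assms(3) by (auto simp: successively_Cons successively_append_iff)
  moreover have "hd cs \<in> K" "last cs \<in> K" using assms(3,4) by auto
  ultimately have "cs \<in> walks_between K adj1 x x"
    using assms(2-4) adj1_T_K cross1 by (auto simp: walks_between_def)
  moreover have "\<forall>v\<in>set cs. v \<notin> T" using assms(4) disjoint by auto
  then have "swap_runs (c0 # cs) = c0 # swap cs"
    using assms(2,3) map_runs_run_append[of cs _ "[]" swap] by simp
  moreover have "length (swap cs) = length cs" using assms(4) swap_in by blast
  ultimately show ?thesis
    using assms(2) by (auto simp: swap_cycle_def first_tail_def simp del: rotate_Suc)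
qed

lemma M_less:
  assumes s: "s \<in> walks_between K adj1 y y" "s \<notin> swap ` walks_between K adj1 x x"
  shows "M V adj1 (Suc (length s)) < M V adj2 (Suc (length s))"
proof -
  let ?k = "Suc (length s)"
  have s_props: "s \<noteq> []" "set s \<subseteq> K" "successively adj1 s" "hd s = y" "last s = y"
    using s(1) by (auto simp: walks_between_def)
  have "adj2 t y" "adj2 y t" using cross2[OF y_in t_in] sym2 by auto
  then have ts_in: "t # s \<in> cyclic_walks V adj2 ?k"
    using s_props walk_in_K_adj2[OF s_props(3,2)] V_eq t_in
    by (auto simp: cyclic_walks_def cyclic_walk_def successively_append_iff successively_Cons)
  have "t # s \<notin> swap_cycle ` cyclic_walks V adj1 ?k"
  proof
    assume "t # s \<in> swap_cycle ` cyclic_walks V adj1 ?k"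
    then obtain c where c: "c \<in> cyclic_walks V adj1 ?k" "swap_cycle c = t # s" by auto
    obtain c0 cs where c_eq: "c = c0 # cs" using c(1) by (cases c) (auto simp: cyclic_walks_def)
    then have "c0 \<in> T" "pattern cs = pattern s"
      using swap_cycle_in_and_pattern[OF c(1)] c(2) t_in by auto
    moreover have "True \<notin> set (pattern s)" using s_props(2) disjoint by auto
    ultimately have "True \<notin> set (pattern cs)" "length cs = length s"
      by (metis, metis length_map)
    moreover have "set cs \<subseteq> K \<union> T" using c(1) c_eq V_eq by (auto simp: cyclic_walks_def)
    ultimately have "set cs \<subseteq> K" "cs \<noteq> []" using s_props(1) by auto
    then show False
      using swap_cycle_single_excursion[of c0 cs] c c_eq \<open>c0 \<in> T\<close> s(2) by auto
  qed
  then have "card (swap_cycle ` cyclic_walks V adj1 ?k) < card (cyclic_walks V adj2 ?k)"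
    using ts_in swap_cycle_in_and_pattern finite_cyclic_walks[OF finite_V]
    by (intro psubset_card_mono) auto
  then show ?thesis
    using inj_on_swap_cycle by (simp add: M_eq_card_cyclic_walks card_image)
qed

end

section \<open>The rewired path\<close>

text \<open>The vertices (0, i), i \<le> a + b, form a path, and the branches qs hang at (0, a) with the
  labels of \<^const>\<open>starlike_verts\<close>. The adjacency \<open>radj e\<close> replaces the edge between
  (0, 2a + 1) and (0, 2a + 2) by one between (0, e) and (0, 2a + 2): for e = 2a + 1 this is
  S(qs, a, b) and for e = 0 it is S(qs, a + 1, b - 1), both seen from the centre (0, a).\<close>

locale rewired_path =
  fixes qs :: "nat list" and a b :: nat
  assumes a_pos: "1 \<le> a" and a_b: "a + 2 \<le> b"
    and qs_ne: "qs \<noteq> []" and qs_pos: "\<forall>q\<in>set qs. 1 \<le> q"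
begin

definition "pendant = {(Suc i, j) | i j. i < length qs \<and> 1 \<le> j \<and> j \<le> qs ! i}"
definition "verts = {(0, i) | i. i \<le> a + b} \<union> pendant"
definition "core = {(0, i) | i. i \<le> 2 * a + 1} \<union> pendant"
definition "tail = {(0, i) | i. 2 * a + 2 \<le> i \<and> i \<le> a + b}"

definition rarc :: "nat \<Rightarrow> nat \<times> nat \<Rightarrow> nat \<times> nat \<Rightarrow> bool" where
  "rarc e u v \<longleftrightarrow> (fst u = 0 \<and> fst v = 0 \<and> snd v = Suc (snd u) \<and> snd u \<noteq> 2 * a + 1)
     \<or> (u = (0, e) \<and> v = (0, 2 * a + 2))
     \<or> (u = (0, a) \<and> 0 < fst v \<and> snd v = 1)
     \<or> (0 < fst u \<and> fst u = fst v \<and> snd v = Suc (snd u))"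

definition radj :: "nat \<Rightarrow> nat \<times> nat \<Rightarrow> nat \<times> nat \<Rightarrow> bool" where
  "radj e u v \<longleftrightarrow> u \<in> verts \<and> v \<in> verts \<and> (rarc e u v \<or> rarc e v u)"

lemma verts_eq: "verts = core \<union> tail"
  using a_b by (auto simp: verts_def core_def tail_def)

lemma core_tail_disjoint: "core \<inter> tail = {}"
  by (auto simp: core_def tail_def pendant_def)

lemma finite_verts: "finite verts"
proof -
  have "pendant \<subseteq> {..length qs} \<times> {..Max (set qs)}"
    by (auto simp: pendant_def) (meson List.finite_set Max_ge nth_mem order_trans)
  moreover have "{(0::nat, i) | i. i \<le> a + b} = Pair 0 ` {..a + b}" by auto
  ultimately show ?thesis by (simp add: verts_def finite_subset)
qed

lemma radj_sym: "radj e u v \<Longrightarrow> radj e v u"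
  by (auto simp: radj_def)

lemma rarc_cong: "v \<noteq> (0, 2 * a + 2) \<Longrightarrow> rarc e u v = rarc e' u v"
  "u \<noteq> (0, e) \<Longrightarrow> u \<noteq> (0, e') \<Longrightarrow> rarc e u v = rarc e' u v"
  by (simp_all add: rarc_def)

lemma radj_core: "u \<in> core \<Longrightarrow> v \<in> core \<Longrightarrow> radj e u v = radj e' u v"
proof -
  have "(0, 2 * a + 2) \<notin> core" by (auto simp: core_def pendant_def)
  then show "u \<in> core \<Longrightarrow> v \<in> core \<Longrightarrow> radj e u v = radj e' u v"
    unfolding radj_def using rarc_cong(1)[of v e u e'] rarc_cong(1)[of u e v e'] by metis
qed

lemma radj_tail:
  assumes "e \<le> 2 * a + 1" "e' \<le> 2 * a + 1" "u \<in> tail" "v \<in> tail"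
  shows "radj e u v = radj e' u v"
proof -
  have "w \<noteq> (0, e)" "w \<noteq> (0, e')" if "w \<in> tail" for w using that assms(1,2) by (auto simp: tail_def)
  then show ?thesis
    unfolding radj_def using rarc_cong(2)[of u e e' v] rarc_cong(2)[of v e e' u] assms(3,4) by metis
qed

lemma radj_core_tail:
  assumes "e \<le> 2 * a + 1" "u \<in> core" "v \<in> tail"
  shows "radj e u v \<longleftrightarrow> u = (0, e) \<and> v = (0, 2 * a + 2)"
proof -
  obtain i where v: "v = (0, i)" "2 * a + 2 \<le> i" "i \<le> a + b" using assms(3) by (auto simp: tail_def)
  have "u \<in> verts" "v \<in> verts" using assms(2,3) verts_eq by auto
  consider j where "u = (0, j)" "j \<le> 2 * a + 1" | "0 < fst u"
    using assms(2) by (auto simp: core_def pendant_def)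
  then show ?thesis
  proof cases
    case (1 j)
    then show ?thesis using v assms(1) \<open>u \<in> verts\<close> \<open>v \<in> verts\<close>
      unfolding radj_def rarc_def by auto
  next
    case 2
    then show ?thesis using v unfolding radj_def rarc_def by auto
  qed
qed

abbreviation "adjG \<equiv> radj (2 * a + 1)"
abbreviation "x0 \<equiv> (0::nat, 2 * a + 1)"

definition reflect :: "nat \<times> nat \<Rightarrow> nat \<times> nat" where
  "reflect u = (if fst u = 0 \<and> snd u \<le> 2 * a + 1 then (0, 2 * a + 1 - snd u) else u)"

definition path_above :: "nat \<Rightarrow> (nat \<times> nat) set" where
  "path_above n = {u. fst u = 0 \<and> n < snd u}"

definition path_below :: "nat \<Rightarrow> (nat \<times> nat) set" where
  "path_below n = {u. fst u = 0 \<and> snd u < n}"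

lemma reflect_core: "u \<in> core \<Longrightarrow> reflect u \<in> core"
  by (auto simp: reflect_def core_def)

lemma map_reflect_reflect: "set xs \<subseteq> core \<Longrightarrow> map reflect (map reflect xs) = xs"
  by (induction xs) (auto simp: reflect_def core_def pendant_def)

lemma reflect_path_above: "u \<in> core \<Longrightarrow> u \<in> path_above n \<Longrightarrow> reflect u \<in> path_below (2 * a + 1 - n)"
  by (auto simp: reflect_def core_def pendant_def path_above_def path_below_def)

lemma set_map_reflect_path_above:
  "set xs \<subseteq> core \<Longrightarrow> set xs \<subseteq> path_above n \<Longrightarrow> set (map reflect xs) \<subseteq> path_below (2 * a + 1 - n)"
  unfolding set_map using reflect_path_above by blast

lemma path_adj: "i \<le> 2 * a + 1 \<Longrightarrow> j \<le> 2 * a + 1 \<Longrightarrow> adjG (0, i) (0, j) \<longleftrightarrow> j = Suc i \<or> i = Suc j"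
  using a_b by (auto simp: radj_def rarc_def verts_def)

lemma core_path_above: "u \<in> core \<Longrightarrow> u \<in> path_above n \<Longrightarrow> \<exists>i. u = (0, i) \<and> n < i \<and> i \<le> 2 * a + 1"
  by (auto simp: core_def pendant_def path_above_def)

lemma reflect_walk:
  assumes "p \<in> walks_between core adjG u v" "set p \<subseteq> path_above n"
  shows "map reflect p \<in> walks_between core adjG (reflect u) (reflect v)"
proof -
  have adj: "adjG (reflect u') (reflect v')"
    if "u' \<in> core" "v' \<in> core" "u' \<in> path_above n" "v' \<in> path_above n" "adjG u' v'" for u' v'
    using core_path_above[OF that(1,3)] core_path_above[OF that(2,4)] that(5) path_adj
    by (auto simp: reflect_def)
  have p: "successively adjG p" "set p \<subseteq> core" "p \<noteq> []" "hd p = u" "last p = v"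
    using assms(1) by (auto simp: walks_between_def)
  have "successively (\<lambda>u' v'. adjG (reflect u') (reflect v')) p"
    by (rule successively_mono[OF p(1)]) (use adj p(2) assms(2) in blast)
  then show ?thesis
    using p by (auto simp: walks_between_def successively_map hd_map last_map reflect_core)
qed

lemma adjG_leave_path_above:
  assumes "a \<le> n" "n \<le> 2 * a" "u \<in> core" "v \<in> core" "adjG u v" "u \<in> path_above n" "v \<notin> path_above n"
  shows "u = (0, Suc n) \<and> v = (0, n)"
proof -
  obtain i where u: "u = (0, i)" "n < i" "i \<le> 2 * a + 1" using core_path_above assms(3,6) by blast
  show ?thesis
  proof (cases "fst v = 0")
    case True
    then obtain j where "v = (0, j)" "j \<le> n"
      using assms(4,7) by (cases v) (auto simp: path_above_def)
    then show ?thesis using path_adj u assms(2,5) by auto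
  next
    case False
    then show ?thesis using assms(1,5) u by (auto simp: radj_def rarc_def)
  qed
qed

text \<open>The reflection is not an automorphism of the core, because the branches qs hang at (0, a).
  Hence only the first stretch right of (0, a) and the last stretch right of (0, a + 1) are
  reflected, and the two blocks between them are swapped (see \<open>reflect_ends_split\<close>).\<close>

definition reflect_ends :: "(nat \<times> nat) list \<Rightarrow> (nat \<times> nat) list" where
  "reflect_ends r = (if set r \<subseteq> path_above a then map reflect r else
     (let P1 = takeWhile (\<lambda>u. u \<in> path_above a) r; rest = dropWhile (\<lambda>u. u \<in> path_above a) r;
          Mid = dropWhile_end (\<lambda>u. u \<in> path_above a) rest;
          P2 = takeWhile_end (\<lambda>u. u \<in> path_above a) rest;
          P2a = dropWhile_end (\<lambda>u. u \<in> path_above (Suc a)) P2;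
          P2b = takeWhile_end (\<lambda>u. u \<in> path_above (Suc a)) P2
      in map reflect P1 @ P2a @ Mid @ map reflect P2b))"

definition unreflect_ends :: "(nat \<times> nat) list \<Rightarrow> (nat \<times> nat) list" where
  "unreflect_ends z = (if set z \<subseteq> path_below (Suc a) then map reflect z else
     (let A = takeWhile (\<lambda>u. u \<in> path_below (Suc a)) z;
          rest = dropWhile (\<lambda>u. u \<in> path_below (Suc a)) z;
          B = takeWhile (\<lambda>u. u \<in> path_above a) rest; rest' = dropWhile (\<lambda>u. u \<in> path_above a) rest;
          Mid = dropWhile_end (\<lambda>u. u \<in> path_below a) rest';
          C = takeWhile_end (\<lambda>u. u \<in> path_below a) rest'
      in map reflect A @ Mid @ B @ map reflect C))"

lemma reflect_ends_core:
  assumes "set r \<subseteq> core"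
  shows "set (reflect_ends r) \<subseteq> core \<and> length (reflect_ends r) = length r"
proof (cases "set r \<subseteq> path_above a")
  case True
  then show ?thesis using assms reflect_core by (auto simp: reflect_ends_def)
next
  case False
  define P1 where "P1 = takeWhile (\<lambda>u. u \<in> path_above a) r"
  define rest where "rest = dropWhile (\<lambda>u. u \<in> path_above a) r"
  define Mid where "Mid = dropWhile_end (\<lambda>u. u \<in> path_above a) rest"
  define P2 where "P2 = takeWhile_end (\<lambda>u. u \<in> path_above a) rest"
  define P2a where "P2a = dropWhile_end (\<lambda>u. u \<in> path_above (Suc a)) P2"
  define P2b where "P2b = takeWhile_end (\<lambda>u. u \<in> path_above (Suc a)) P2"
  have "reflect_ends r = map reflect P1 @ P2a @ Mid @ map reflect P2b"
    using False
    by (simp add: reflect_ends_def Let_def P1_def rest_def Mid_def P2_def P2a_def P2b_def)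
  moreover have "r = P1 @ Mid @ P2a @ P2b"
    using dropWhile_end_append_takeWhile_end
    by (metis P1_def rest_def Mid_def P2_def P2a_def P2b_def append.assoc takeWhile_dropWhile_id)
  ultimately show ?thesis using assms reflect_core by auto
qed

lemma reflect_ends_split:
  assumes r: "r \<in> walks_between core adjG x0 x0" and not_above: "\<not> set r \<subseteq> path_above a"
  obtains P1 Mid P2a P2b where "r = P1 @ Mid @ P2a @ P2b"
    "reflect_ends r = map reflect P1 @ P2a @ Mid @ map reflect P2b"
    "P1 \<in> walks_between core adjG x0 (0, Suc a)" "set P1 \<subseteq> path_above a"
    "Mid \<in> walks_between core adjG (0, a) (0, a)"
    "P2a \<in> walks_between core adjG (0, Suc a) (0, Suc a)" "set P2a \<subseteq> path_above a"
    "P2b \<in> walks_between core adjG (0, Suc (Suc a)) x0" "set P2b \<subseteq> path_above (Suc a)"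
proof -
  have x0_above: "x0 \<in> path_above a" "x0 \<in> path_above (Suc a)"
    using a_pos by (auto simp: path_above_def)
  have ends: "\<And>p K u v. p \<in> walks_between K adjG u v \<Longrightarrow> u \<in> set p \<and> v \<in> set p \<and> set p \<subseteq> K"
    by (auto simp: walks_between_def)
  define P1 where "P1 = takeWhile (\<lambda>u. u \<in> path_above a) r"
  define rest where "rest = dropWhile (\<lambda>u. u \<in> path_above a) r"
  note split1 = walks_between_split_takeWhile[OF r x0_above(1) not_above, folded P1_def rest_def]
  have "last P1 \<in> path_above a" "last P1 \<in> core" "hd rest \<in> core"
    using ends[OF split1(2)] ends[OF split1(4)] split1(3) by auto
  then have P1_end: "last P1 = (0, Suc a)" and rest_start: "hd rest = (0, a)"
    using adjG_leave_path_above[of a "last P1" "hd rest"] split1(5,6) a_pos by auto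
  define Mid where "Mid = dropWhile_end (\<lambda>u. u \<in> path_above a) rest"
  define P2 where "P2 = takeWhile_end (\<lambda>u. u \<in> path_above a) rest"
  have "\<not> set rest \<subseteq> path_above a"
    using split1(5) ends[OF split1(4)] by auto
  note split2 = walks_between_split_takeWhile_end[OF split1(4) x0_above(1) this,
      folded Mid_def P2_def]
  have "hd P2 \<in> path_above a" "hd P2 \<in> core" "last Mid \<in> core" "adjG (hd P2) (last Mid)"
    using ends[OF split2(2)] ends[OF split2(4)] split2(5) radj_sym[OF split2(6)] by auto
  then have Mid_end: "last Mid = (0, a)" and P2_start: "hd P2 = (0, Suc a)"
    using adjG_leave_path_above[of a "hd P2" "last Mid"] split2(3) a_pos by auto
  define P2a where "P2a = dropWhile_end (\<lambda>u. u \<in> path_above (Suc a)) P2"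
  define P2b where "P2b = takeWhile_end (\<lambda>u. u \<in> path_above (Suc a)) P2"
  have "\<not> set P2 \<subseteq> path_above (Suc a)"
    using ends[OF split2(4)] P2_start by (auto simp: path_above_def)
  note split3 = walks_between_split_takeWhile_end[OF split2(4) x0_above(2) this,
      folded P2a_def P2b_def]
  have "hd P2b \<in> path_above (Suc a)" "hd P2b \<in> core" "last P2a \<in> core"
    using ends[OF split3(2)] ends[OF split3(4)] split3(5) by auto
  then have P2a_end: "last P2a = (0, Suc a)" and P2b_start: "hd P2b = (0, Suc (Suc a))"
    using adjG_leave_path_above[of "Suc a" "hd P2b" "last P2a"] split3(3) radj_sym[OF split3(6)]
      a_pos
    by auto
  show ?thesis
  proof (rule that)
    show "r = P1 @ Mid @ P2a @ P2b" using split1(1) split2(1) split3(1) by simp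
    show "reflect_ends r = map reflect P1 @ P2a @ Mid @ map reflect P2b"
      using not_above
      by (simp add: reflect_ends_def Let_def P1_def rest_def Mid_def P2_def P2a_def P2b_def)
    show "set P2a \<subseteq> path_above a" using split2(5) split3(1) by auto
  qed (use split1(2,3) split2(2) split3(2,4,5) P1_end rest_start Mid_end P2_start P2a_end P2b_start
      in simp_all)
qed

lemma reflect_ends_walk:
  assumes r: "r \<in> walks_between core adjG x0 x0"
  shows "reflect_ends r \<in> walks_between core adjG (0, 0) (0, 0)"
proof (cases "set r \<subseteq> path_above a")
  case True
  then show ?thesis
    using reflect_walk[OF r True] by (simp add: reflect_ends_def reflect_def)
next
  case False
  then obtain P1 Mid P2a P2b
    where pieces: "reflect_ends r = map reflect P1 @ P2a @ Mid @ map reflect P2b"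
    "P1 \<in> walks_between core adjG x0 (0, Suc a)" "set P1 \<subseteq> path_above a"
    "Mid \<in> walks_between core adjG (0, a) (0, a)"
    "P2a \<in> walks_between core adjG (0, Suc a) (0, Suc a)"
    "P2b \<in> walks_between core adjG (0, Suc (Suc a)) x0" "set P2b \<subseteq> path_above (Suc a)"
    using reflect_ends_split[OF r] by metis
  have reflected: "map reflect P1 \<in> walks_between core adjG (0, 0) (0, a)"
    "map reflect P2b \<in> walks_between core adjG (0, a - 1) (0, 0)"
    using reflect_walk[OF pieces(2,3)] reflect_walk[OF pieces(6,7)] a_pos
    by (auto simp: reflect_def)
  have "adjG (0, a) (0, Suc a)" "adjG (0, Suc a) (0, a)" "adjG (0, a) (0, a - 1)"
    using path_adj a_pos by auto
  then have "Mid @ map reflect P2b \<in> walks_between core adjG (0, a) (0, 0)"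
    "P2a @ Mid @ map reflect P2b \<in> walks_between core adjG (0, Suc a) (0, 0)"
    using walks_between_append[OF pieces(4) reflected(2)]
      walks_between_append[OF pieces(5), of "Mid @ map reflect P2b"] by auto
  then show ?thesis
    unfolding pieces(1) using walks_between_append[OF reflected(1)] \<open>adjG (0, a) (0, Suc a)\<close>
    by blast
qed

lemma unreflect_ends_arranged:
  assumes "set P1 \<subseteq> core" "set P1 \<subseteq> path_above a" "set P2b \<subseteq> core" "set P2b \<subseteq> path_above (Suc a)"
    "set P2a \<subseteq> path_above a" "P2a \<noteq> []" "hd P2a = (0, Suc a)"
    "Mid \<noteq> []" "hd Mid = (0, a)" "last Mid = (0, a)"
  shows "unreflect_ends (map reflect P1 @ P2a @ Mid @ map reflect P2b)
    = map reflect (map reflect P1) @ Mid @ P2a @ map reflect (map reflect P2b)"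
proof -
  let ?z = "map reflect P1 @ P2a @ Mid @ map reflect P2b"
  have P1': "set (map reflect P1) \<subseteq> path_below (Suc a)"
    using set_map_reflect_path_above[OF assms(1,2)] by simp
  have P2b': "set (map reflect P2b) \<subseteq> path_below a"
    using set_map_reflect_path_above[OF assms(3,4)] by simp
  have "(0, Suc a) \<in> set ?z" "(0, Suc a) \<notin> path_below (Suc a)"
    using assms(6,7) hd_in_set[of P2a] by (auto simp: path_below_def)
  then have not_below: "\<not> set ?z \<subseteq> path_below (Suc a)" by blast
  have "\<forall>u\<in>set (map reflect P1). u \<in> path_below (Suc a)"
    "P2a @ Mid @ map reflect P2b \<noteq> []" "hd (P2a @ Mid @ map reflect P2b) \<notin> path_below (Suc a)"
    using P1' assms(6,7) by (auto simp: path_below_def)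
  note split1 = takeWhile_dropWhile_append[OF this]
  have "\<forall>u\<in>set P2a. u \<in> path_above a"
    "Mid @ map reflect P2b \<noteq> []" "hd (Mid @ map reflect P2b) \<notin> path_above a"
    using assms(5,8,9) by (auto simp: path_above_def)
  note split2 = takeWhile_dropWhile_append[OF this]
  have "Mid \<noteq> []" "last Mid \<notin> path_below a" "\<forall>u\<in>set (map reflect P2b). u \<in> path_below a"
    using P2b' assms(8,10) by (auto simp: path_below_def)
  note split3 = takeWhile_end_dropWhile_end_append[OF this]
  show ?thesis
    unfolding unreflect_ends_def Let_def if_not_P[OF not_below] split1 split2 split3 by simp
qed

lemma unreflect_reflect_ends:
  assumes r: "r \<in> walks_between core adjG x0 x0"
  shows "unreflect_ends (reflect_ends r) = r"
proof (cases "set r \<subseteq> path_above a")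
  case True
  have "set r \<subseteq> core" using r by (simp add: walks_between_def)
  then have "set (map reflect r) \<subseteq> path_below (Suc a)"
    using set_map_reflect_path_above[of r a] True by simp
  then show ?thesis
    using True map_reflect_reflect[OF \<open>set r \<subseteq> core\<close>]
    by (simp add: reflect_ends_def unreflect_ends_def)
next
  case False
  then obtain P1 Mid P2a P2b where pieces: "r = P1 @ Mid @ P2a @ P2b"
    "reflect_ends r = map reflect P1 @ P2a @ Mid @ map reflect P2b"
    "P1 \<in> walks_between core adjG x0 (0, Suc a)" "set P1 \<subseteq> path_above a"
    "Mid \<in> walks_between core adjG (0, a) (0, a)"
    "P2a \<in> walks_between core adjG (0, Suc a) (0, Suc a)" "set P2a \<subseteq> path_above a"
    "P2b \<in> walks_between core adjG (0, Suc (Suc a)) x0" "set P2b \<subseteq> path_above (Suc a)"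
    using reflect_ends_split[OF r] by metis
  have in_core: "set P1 \<subseteq> core" "set Mid \<subseteq> core" "set P2a \<subseteq> core" "set P2b \<subseteq> core"
    using pieces(3,5,6,8) by (auto simp: walks_between_def)
  show ?thesis
    using unreflect_ends_arranged[OF in_core(1) pieces(4) in_core(4) pieces(9,7)] pieces(1,2,5,6)
      in_core map_reflect_reflect by (simp add: walks_between_def)
qed

lemma reflect_ends_visits:
  assumes r: "r \<in> walks_between core adjG x0 x0"
  shows "set (reflect_ends r) \<subseteq> path_below (Suc a) \<or> (0, Suc a) \<in> set (reflect_ends r)"
proof (cases "set r \<subseteq> path_above a")
  case True
  have "set r \<subseteq> core" using r by (simp add: walks_between_def)
  then have "set (map reflect r) \<subseteq> path_below (Suc a)"
    using set_map_reflect_path_above[of r a] True by simp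
  then show ?thesis using True by (simp add: reflect_ends_def)
next
  case False
  then obtain P1 Mid P2a P2b where "reflect_ends r = map reflect P1 @ P2a @ Mid @ map reflect P2b"
    "P2a \<in> walks_between core adjG (0, Suc a) (0, Suc a)"
    using reflect_ends_split[OF r] by metis
  then have "(0, Suc a) \<in> set (reflect_ends r)"
    using hd_in_set[of P2a] by (auto simp: walks_between_def)
  then show ?thesis by blast
qed

lemma rewired_excursion_swap:
  "excursion_swap verts core tail adjG (radj 0) x0 (0, 0) (0, 2 * a + 2)
    reflect_ends unreflect_ends"
proof unfold_locales
  show "finite verts" by (rule finite_verts)
  show "verts = core \<union> tail" by (rule verts_eq)
  show "core \<inter> tail = {}" by (rule core_tail_disjoint)
  show "x0 \<in> core" "(0, 0) \<in> core" by (simp_all add: core_def)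
  show "(0, 2 * a + 2) \<in> tail" using a_b by (simp add: tail_def)
  show "\<And>u v. adjG u v \<Longrightarrow> adjG v u" "\<And>u v. radj 0 u v \<Longrightarrow> radj 0 v u"
    by (rule radj_sym, assumption)+
  show "\<And>u v. u \<in> core \<Longrightarrow> v \<in> core \<Longrightarrow> adjG u v = radj 0 u v" by (rule radj_core)
  show "\<And>u v. u \<in> tail \<Longrightarrow> v \<in> tail \<Longrightarrow> adjG u v = radj 0 u v"
    using radj_tail[of "2 * a + 1" 0] by simp
  show "\<And>u v. u \<in> core \<Longrightarrow> v \<in> tail \<Longrightarrow> adjG u v \<longleftrightarrow> u = x0 \<and> v = (0, 2 * a + 2)"
    "\<And>u v. u \<in> core \<Longrightarrow> v \<in> tail \<Longrightarrow> radj 0 u v \<longleftrightarrow> u = (0, 0) \<and> v = (0, 2 * a + 2)"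
    by (rule radj_core_tail; simp)+
  show "\<And>r. set r \<subseteq> core \<Longrightarrow> set (reflect_ends r) \<subseteq> core \<and> length (reflect_ends r) = length r"
    by (rule reflect_ends_core)
  show "\<And>r. r \<in> walks_between core adjG x0 x0 \<Longrightarrow>
      reflect_ends r \<in> walks_between core adjG (0, 0) (0, 0)"
    by (rule reflect_ends_walk)
  show "\<And>r. r \<in> walks_between core adjG x0 x0 \<Longrightarrow> unreflect_ends (reflect_ends r) = r"
    by (rule unreflect_reflect_ends)
qed

definition pendant_excursion :: "(nat \<times> nat) list" where
  "pendant_excursion = map (Pair 0) [0..<Suc a] @ [(1, 1)] @ rev (map (Pair 0) [0..<Suc a])"

lemma path_walk: "n \<le> 2 * a + 1 \<Longrightarrow> successively adjG (map (Pair 0) [0..<Suc n])"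
proof (induction n)
  case (Suc n)
  then have "adjG (0, n) (0, Suc n)" using path_adj[of n "Suc n"] by simp
  then show ?case using Suc by (simp add: successively_append_iff last_map)
qed simp

lemma pendant_excursion_walk: "pendant_excursion \<in> walks_between core adjG (0, 0) (0, 0)"
proof -
  let ?p = "map (Pair (0::nat)) [0..<Suc a]"
  have "(Suc 0, 1) \<in> pendant"
    using qs_ne qs_pos by (auto simp: pendant_def intro!: exI[of _ 0])
  then have "(1, 1) \<in> core" "(1, 1) \<in> verts" "(0, a) \<in> verts"
    by (auto simp: core_def verts_def)
  then have "adjG (0, a) (1, 1)" "adjG (1, 1) (0, a)"
    by (auto simp: radj_def rarc_def)
  moreover have "successively adjG ?p" using path_walk[of a] by simp
  moreover from this have "successively adjG (rev ?p)"
    unfolding successively_rev by (rule successively_mono) (simp add: radj_sym)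
  ultimately have "successively adjG pendant_excursion"
    by (simp add: pendant_excursion_def successively_append_iff last_map hd_rev)
  moreover have "set pendant_excursion \<subseteq> core"
    using \<open>(1, 1) \<in> core\<close> by (auto simp: pendant_excursion_def core_def)
  ultimately show ?thesis
    by (simp add: walks_between_def pendant_excursion_def hd_map upt_conv_Cons last_rev
        del: upt_Suc)
qed

lemma pendant_excursion_not_reflected:
  "pendant_excursion \<notin> reflect_ends ` walks_between core adjG x0 x0"
proof
  assume "pendant_excursion \<in> reflect_ends ` walks_between core adjG x0 x0"
  then obtain r where "r \<in> walks_between core adjG x0 x0" "pendant_excursion = reflect_ends r"
    by blast
  moreover have "(1, 1) \<in> set pendant_excursion" "(0, Suc a) \<notin> set pendant_excursion"
    by (auto simp: pendant_excursion_def)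
  ultimately show False
    using reflect_ends_visits by (fastforce simp: path_below_def)
qed

theorem rewired_path_prec:
  "(\<forall>k. M verts adjG k \<le> M verts (radj 0) k) \<and> (\<exists>k. M verts adjG k < M verts (radj 0) k)"
  using excursion_swap.M_le[OF rewired_excursion_swap]
    excursion_swap.M_less[OF rewired_excursion_swap pendant_excursion_walk
      pendant_excursion_not_reflected]
  by blast

section \<open>Starlike trees\<close>

lemma starlike_verts_cases:
  assumes "u \<in> starlike_verts (qs @ [c, d])"
  obtains "u = (0, 0)" | "u \<in> pendant" "0 < fst u" "fst u \<le> length qs"
    | j where "u = (Suc (length qs), j)" "1 \<le> j" "j \<le> c"
    | j where "u = (Suc (Suc (length qs)), j)" "1 \<le> j" "j \<le> d"
proof -
  consider "u = (0, 0)"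
    | i j where "u = (Suc i, j)" "i < Suc (Suc (length qs))" "1 \<le> j" "j \<le> (qs @ [c, d]) ! i"
    using assms by (auto simp: starlike_verts_def)
  then show thesis
  proof cases
    case (2 i j)
    then consider "i < length qs" | "i = length qs" | "i = Suc (length qs)" by linarith
    then show thesis using 2 that by cases (auto simp: pendant_def nth_append)
  qed (use that in blast)
qed

lemma starlike_verts_cases_split:
  assumes "u \<in> starlike_verts (qs @ [c, d])"
  obtains "u = (0, 0)" | "u \<in> pendant" "0 < fst u" "fst u \<le> length qs"
    | j where "u = (Suc (length qs), j)" "1 \<le> j" "j \<le> c"
    | j where "u = (Suc (Suc (length qs)), j)" "1 \<le> j" "j \<le> a"
    | j where "u = (Suc (Suc (length qs)), j)" "a < j" "j \<le> d"
  using assms by (cases rule: starlike_verts_cases) (metis not_le)+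

text \<open>In S(qs, a, b) the branch a runs to the left
  and b to the right; in S(qs, a + 1, b - 1) the branch a + 1 runs to the right, and b - 1 runs
  to the left and continues past (0, 0) into the tail.\<close>

definition iso_G :: "nat \<times> nat \<Rightarrow> nat \<times> nat" where
  "iso_G u = (if fst u = 0 then (0, a) else if fst u = Suc (length qs) then (0, a - snd u)
     else if fst u = Suc (Suc (length qs)) then (0, a + snd u) else u)"

lemma iso_G_simps:
  "iso_G (0, 0) = (0, a)" "iso_G (Suc (length qs), j) = (0, a - j)"
  "iso_G (Suc (Suc (length qs)), j) = (0, a + j)"
  "0 < fst u \<Longrightarrow> fst u \<le> length qs \<Longrightarrow> iso_G u = u"
  by (auto simp: iso_G_def)

lemma arc_iso_G:
  assumes "u \<in> starlike_verts (qs @ [a, b])" "v \<in> starlike_verts (qs @ [a, b])"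
  shows "(starlike_arc u v \<or> starlike_arc v u) \<longleftrightarrow>
    (rarc (2 * a + 1) (iso_G u) (iso_G v) \<or> rarc (2 * a + 1) (iso_G v) (iso_G u))"
  using assms by (elim starlike_verts_cases) (auto simp: starlike_arc_def rarc_def iso_G_simps)

definition iso_H :: "nat \<times> nat \<Rightarrow> nat \<times> nat" where
  "iso_H u = (if fst u = 0 then (0, a) else if fst u = Suc (length qs) then (0, a + snd u)
     else if fst u = Suc (Suc (length qs))
       then (if snd u \<le> a then (0, a - snd u) else (0, Suc a + snd u)) else u)"

lemma iso_H_simps:
  "iso_H (0, 0) = (0, a)" "iso_H (Suc (length qs), j) = (0, a + j)"
  "j \<le> a \<Longrightarrow> iso_H (Suc (Suc (length qs)), j) = (0, a - j)"
  "a < j \<Longrightarrow> iso_H (Suc (Suc (length qs)), j) = (0, Suc a + j)"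
  "0 < fst u \<Longrightarrow> fst u \<le> length qs \<Longrightarrow> iso_H u = u"
  by (auto simp: iso_H_def)

lemma arc_iso_H:
  assumes "u \<in> starlike_verts (qs @ [Suc a, b - 1])" "v \<in> starlike_verts (qs @ [Suc a, b - 1])"
  shows "(starlike_arc u v \<or> starlike_arc v u) \<longleftrightarrow>
    (rarc 0 (iso_H u) (iso_H v) \<or> rarc 0 (iso_H v) (iso_H u))"
  using assms
  by (elim starlike_verts_cases_split) (auto simp: starlike_arc_def rarc_def iso_H_simps)

lemma starlike_verts_intros:
  "(0, 0) \<in> starlike_verts xs" "u \<in> pendant \<Longrightarrow> u \<in> starlike_verts (qs @ [c, d])"
  "1 \<le> j \<Longrightarrow> j \<le> c \<Longrightarrow> (Suc (length qs), j) \<in> starlike_verts (qs @ [c, d])"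
  "1 \<le> j \<Longrightarrow> j \<le> d \<Longrightarrow> (Suc (Suc (length qs)), j) \<in> starlike_verts (qs @ [c, d])"
  by (auto simp: starlike_verts_def pendant_def nth_append)

lemma verts_cases:
  assumes "v \<in> verts"
  obtains "v \<in> pendant" "0 < fst v" "fst v \<le> length qs" | i where "v = (0, i)" "i \<le> a + b"
  using assms by (auto simp: verts_def pendant_def)

lemma verts_intros: "i \<le> a + b \<Longrightarrow> (0, i) \<in> verts" "u \<in> pendant \<Longrightarrow> u \<in> verts"
  by (auto simp: verts_def)

lemma bij_iso_G: "bij_betw iso_G (starlike_verts (qs @ [a, b])) verts"
proof (rule bij_betw_byWitness[where f' = "\<lambda>v. if fst v = 0
    then (if snd v = a then (0, 0) else if snd v < a then (Suc (length qs), a - snd v)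
      else (Suc (Suc (length qs)), snd v - a)) else v"])
qed (auto simp: iso_G_simps starlike_verts_intros verts_intros
    elim!: starlike_verts_cases verts_cases)

lemma bij_iso_H: "bij_betw iso_H (starlike_verts (qs @ [Suc a, b - 1])) verts"
proof (rule bij_betw_byWitness[where f' = "\<lambda>v. if fst v = 0
    then (if snd v = a then (0, 0) else if snd v < a then (Suc (Suc (length qs)), a - snd v)
      else if snd v \<le> 2 * a + 1 then (Suc (length qs), snd v - a)
      else (Suc (Suc (length qs)), snd v - Suc a)) else v"])
qed (use a_b in \<open>auto simp: iso_H_simps starlike_verts_intros verts_intros
    elim!: starlike_verts_cases_split verts_cases\<close>)

theorem starlike_prec: "starlike (qs @ [a, b]) \<prec>\<^sub>W starlike (qs @ [Suc a, b - 1])"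
proof -
  have "M (starlike_verts (qs @ [a, b])) (starlike_adj (qs @ [a, b])) k = M verts adjG k" for k
    using bij_iso_G arc_iso_G bij_betwE[OF bij_iso_G]
    by (intro M_eq_of_iso) (auto simp: radj_def starlike_adj_def)
  moreover have "M (starlike_verts (qs @ [Suc a, b - 1])) (starlike_adj (qs @ [Suc a, b - 1])) k
      = M verts (radj 0) k" for k
    using bij_iso_H arc_iso_H bij_betwE[OF bij_iso_H]
    by (intro M_eq_of_iso) (auto simp: radj_def starlike_adj_def)
  ultimately show ?thesis
    using rewired_path_prec by (simp add: walk_prec_def starlike_def)
qed

end

lemma take_append_last_two:
  assumes "length xs = Suc (Suc m)"
  shows "xs = take m xs @ [xs ! m, xs ! Suc m]"
proof (rule nth_equalityI)
  fix i assume "i < length xs"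
  then consider "i < m" | "i = m" | "i = Suc m" using assms by linarith
  then show "xs ! i = (take m xs @ [xs ! m, xs ! Suc m]) ! i"
    using assms by cases (simp_all add: nth_append)
qed (use assms in simp)

theorem proposition1:
  fixes as :: "nat list" and k :: nat
  assumes "length as = k" and "k \<ge> 3"
    and "sorted as" and "\<forall>a\<in>set as. 1 \<le> a"
    and "as ! (k - 2) \<le> as ! (k - 1) - 2"
  shows "starlike as \<prec>\<^sub>W starlike (as[k - 2 := as ! (k - 2) + 1, k - 1 := as ! (k - 1) - 1])"
proof -
  define m where "m = k - 2"
  have k: "k = Suc (Suc m)" and "0 < m" using assms(2) by (auto simp: m_def)
  define qs a b where "qs = take m as" and "a = as ! m" and "b = as ! Suc m"
  have as_eq: "as = qs @ [a, b]"
    unfolding qs_def a_def b_def by (rule take_append_last_two) (use assms(1) k in simp)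
  have "1 \<le> a" using assms(4) as_eq by simp
  interpret rewired_path qs a b
  proof
    show "1 \<le> a" by fact
    show "a + 2 \<le> b" using assms(5) \<open>1 \<le> a\<close> k by (simp add: a_def b_def)
    show "qs \<noteq> []" using assms(1) k \<open>0 < m\<close> by (auto simp: qs_def)
    show "\<forall>q\<in>set qs. 1 \<le> q" using assms(4) as_eq by simp
  qed
  have "as[k - 2 := as ! (k - 2) + 1, k - 1 := as ! (k - 1) - 1] = qs @ [Suc a, b - 1]"
    using assms(1) k as_eq by (simp add: list_update_append nth_append)
  then show ?thesis
    using starlike_prec as_eq by simp
qed

end
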